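(* Let $\beta:[r]\to[n]$ be injective and $R\in L_n(T_R(\beta))$. If there exist $m$, $L\in L_m(P_m)$ and an increasing $\alpha:[r]\to[m]$ such that $L\,\Pi(\alpha,\beta)=\Pi(\alpha,\beta)\,R$, then $R=I_n$.
   Context: $\mathbb{F}$ is the field with two elements, $[n]=\{1,\dots,n\}$, $e_{n,i}$ standard basis column vectors, $I_n$ identity. $P_n=\{(i,j):i,j\in[n],i>j\}$; for transitive $T\subseteq P_n$, $L_n(T)=I_n+\mathrm{span}_{\mathbb{F}}\{e_{n,i}e_{n,j}^{\top}:(i,j)\in T\}$. $\Pi(\alpha,\beta)=\sum_{i=1}^re_{m,\alpha(i)}e_{n,\beta(i)}^{\top}$. For injective $\beta$, $T_R(\beta)=\{(i,j):i\in\mathrm{Im}(\beta),j<i,j\notin\{\beta(1),\dots,\beta(\beta^{-1}(i)-1)\}\}$ (a transitive subset of $P_n$). *)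

theory Defs
  imports "HOL-Library.Z2" "Jordan_Normal_Form.Matrix"
begin

text \<open>Matrices over the two-element field (type bit). Paper indices are 1-based;
  JNF matrix entries are 0-based, so paper entry (i,j) is entry (i-1,j-1).\<close>

definition Pset :: "nat \<Rightarrow> (nat \<times> nat) set" where
  "Pset n = {(i,j). i \<in> {1..n} \<and> j \<in> {1..n} \<and> i > j}"

text \<open>L_n(T) = I_n + span{E_ij : (i,j) in T}; the span of elementary matrices
  E_ij, (i,j) in T, is the set of n x n matrices supported on T.\<close>
definition Lset :: "nat \<Rightarrow> (nat \<times> nat) set \<Rightarrow> bit mat set" where
  "Lset n T = {1\<^sub>m n + M | M. M \<in> carrier_mat n n \<and>
      (\<forall>i<n. \<forall>j<n. M $$ (i,j) \<noteq> 0 \<longrightarrow> (Suc i, Suc j) \<in> T)}"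

definition PiMat :: "nat \<Rightarrow> nat \<Rightarrow> nat \<Rightarrow> (nat \<Rightarrow> nat) \<Rightarrow> (nat \<Rightarrow> nat) \<Rightarrow> bit mat" where
  "PiMat m n r \<alpha> \<beta> = mat m n (\<lambda>(a,b). \<Sum>k\<in>{1..r}. if \<alpha> k = Suc a \<and> \<beta> k = Suc b then 1 else 0)"

definition TR :: "nat \<Rightarrow> (nat \<Rightarrow> nat) \<Rightarrow> (nat \<times> nat) set" where
  "TR r \<beta> = {(i,j). \<exists>k\<in>{1..r}. i = \<beta> k \<and> 1 \<le> j \<and> j < i \<and> j \<notin> \<beta> ` {1..<k}}"

end

theory Submission
  imports Defs
begin

text \<open>Let \<open>(i,j) \<in> T_R(\<beta>)\<close> with \<open>i = \<beta> k\<close>. Row \<open>\<alpha> k\<close> of \<open>\<Pi> R\<close> is row \<open>i\<close>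
  of \<open>R\<close>, so \<open>R\<^sub>i\<^sub>j = (L \<Pi>)\<^bsub>\<alpha> k, j\<^esub>\<close>. Column \<open>j\<close> of \<open>\<Pi>\<close> is zero unless \<open>j = \<beta> k'\<close>,
  and then the definition of \<open>T_R(\<beta>)\<close> forces \<open>k < k'\<close>, hence \<open>\<alpha> k < \<alpha> k'\<close>, so
  \<open>(L \<Pi>)\<^bsub>\<alpha> k, j\<^esub> = L\<^bsub>\<alpha> k, \<alpha> k'\<^esub>\<close> lies strictly above the diagonal of the unitriangular \<open>L\<close>
  and vanishes. Every other off-diagonal entry of \<open>R\<close> vanishes by \<open>R \<in> L_n(T_R(\<beta>))\<close>.\<close>

lemma Lset_carrier: "R \<in> Lset n T \<Longrightarrow> R \<in> carrier_mat n n"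
  unfolding Lset_def by auto

lemma Lset_index_notin:
  assumes "R \<in> Lset n T" and "i < n" and "j < n" and "(Suc i, Suc j) \<notin> T"
  shows "R $$ (i,j) = 1\<^sub>m n $$ (i,j)"
proof -
  obtain M where R: "R = 1\<^sub>m n + M" and M: "M \<in> carrier_mat n n"
    and supp: "\<forall>i<n. \<forall>j<n. M $$ (i,j) \<noteq> 0 \<longrightarrow> (Suc i, Suc j) \<in> T"
    using assms(1) unfolding Lset_def by blast
  have "M $$ (i,j) = 0" using supp assms(2-4) by blast
  then show ?thesis using R M assms(2,3) by simp
qed

lemma TR_elim:
  assumes "(i, j) \<in> TR r \<beta>"
  obtains k where "k \<in> {1..r}" and "\<beta> k = i" and "j < i"
    and "\<And>k'. k' \<in> {1..r} \<Longrightarrow> \<beta> k' = j \<Longrightarrow> k < k'"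
proof -
  obtain k where k: "k \<in> {1..r}" "i = \<beta> k" "j < i" "j \<notin> \<beta> ` {1..<k}"
    using assms unfolding TR_def by blast
  have "k < k'" if "k' \<in> {1..r}" "\<beta> k' = j" for k'
    using k that by (cases k k' rule: linorder_cases) auto
  with k show thesis using that by blast
qed

lemma PiMat_index_eq_1:
  assumes "a < m" and "c < n" and "k \<in> {1..r}" and "\<alpha> k = Suc a" and "\<beta> k = Suc c"
    and unique: "\<And>k'. k' \<in> {1..r} \<Longrightarrow> \<alpha> k' = Suc a \<Longrightarrow> \<beta> k' = Suc c \<Longrightarrow> k' = k"
  shows "PiMat m n r \<alpha> \<beta> $$ (a,c) = 1"
proof -
  have "PiMat m n r \<alpha> \<beta> $$ (a,c)
      = (\<Sum>k'\<in>{1..r}. if \<alpha> k' = Suc a \<and> \<beta> k' = Suc c then 1 else 0)"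
    using assms(1,2) unfolding PiMat_def by (simp only: index_mat(1) prod.case)
  also have "\<dots> = (\<Sum>k'\<in>{1..r}. if k' = k then 1 else 0)"
    by (intro sum.cong refl) (metis assms(4,5) unique)
  also have "\<dots> = 1" using assms(3) by simp
  finally show ?thesis .
qed

lemma PiMat_index_eq_0:
  assumes "a < m" and "c < n" and "\<forall>k\<in>{1..r}. \<not> (\<alpha> k = Suc a \<and> \<beta> k = Suc c)"
  shows "PiMat m n r \<alpha> \<beta> $$ (a,c) = 0"
proof -
  have "(\<Sum>k\<in>{1..r}. if \<alpha> k = Suc a \<and> \<beta> k = Suc c then 1 else 0 :: bit) = 0"
    using assms(3) by (intro sum.neutral) auto
  then show ?thesis using assms(1,2) by (simp add: PiMat_def)
qed

lemma PiMat_mult_index: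
  assumes "inj_on \<alpha> {1..r}" and "k \<in> {1..r}" and "\<alpha> k = Suc a" and "\<beta> k = Suc i"
    and "a < m" and "i < n" and "B \<in> carrier_mat n p" and "j < p"
  shows "(PiMat m n r \<alpha> \<beta> * B) $$ (a,j) = B $$ (i,j)"
proof -
  let ?P = "PiMat m n r \<alpha> \<beta>"
  have row: "?P $$ (a,c) = (if c = i then 1 else 0)" if "c < n" for c
  proof (cases "c = i")
    case True
    have "?P $$ (a,i) = 1"
      by (rule PiMat_index_eq_1[where \<alpha> = \<alpha> and \<beta> = \<beta>, OF assms(5,6,2,3,4)])
        (metis assms(1-3) inj_onD)
    with True show ?thesis by simp
  next
    case False
    have "\<forall>k'\<in>{1..r}. \<not> (\<alpha> k' = Suc a \<and> \<beta> k' = Suc c)"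
      using False by (metis assms(1-4) inj_onD nat.inject)
    then show ?thesis using False that assms(5) by (simp add: PiMat_index_eq_0)
  qed
  have "(?P * B) $$ (a,j) = (\<Sum>c<n. ?P $$ (a,c) * B $$ (c,j))"
    using assms(5,7,8) by (simp add: PiMat_def scalar_prod_def atLeast0LessThan)
  also have "\<dots> = (\<Sum>c<n. if c = i then B $$ (c,j) else 0)"
    using row by (intro sum.cong) auto
  also have "\<dots> = B $$ (i,j)" using assms(6) by simp
  finally show ?thesis .
qed

lemma mult_PiMat_index:
  assumes "inj_on \<beta> {1..r}" and "k \<in> {1..r}" and "\<beta> k = Suc j" and "\<alpha> k = Suc b"
    and "b < m" and "j < n" and "A \<in> carrier_mat p m" and "i < p"
  shows "(A * PiMat m n r \<alpha> \<beta>) $$ (i,j) = A $$ (i,b)"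
proof -
  let ?P = "PiMat m n r \<alpha> \<beta>"
  have col: "?P $$ (c,j) = (if c = b then 1 else 0)" if "c < m" for c
  proof (cases "c = b")
    case True
    have "?P $$ (b,j) = 1"
      by (rule PiMat_index_eq_1[where \<alpha> = \<alpha> and \<beta> = \<beta>, OF assms(5,6,2,4,3)])
        (metis assms(1-3) inj_onD)
    with True show ?thesis by simp
  next
    case False
    have "\<forall>k'\<in>{1..r}. \<not> (\<alpha> k' = Suc c \<and> \<beta> k' = Suc j)"
      using False by (metis assms(1-4) inj_onD nat.inject)
    then show ?thesis using False that assms(6) by (simp add: PiMat_index_eq_0)
  qed
  have "(A * ?P) $$ (i,j) = (\<Sum>c<m. A $$ (i,c) * ?P $$ (c,j))"
    using assms(6-8) by (simp add: PiMat_def scalar_prod_def atLeast0LessThan)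
  also have "\<dots> = (\<Sum>c<m. if c = b then A $$ (i,c) else 0)"
    using col by (intro sum.cong) auto
  also have "\<dots> = A $$ (i,b)" using assms(5) by simp
  finally show ?thesis .
qed

lemma mult_PiMat_index_eq_0:
  assumes "Suc j \<notin> \<beta> ` {1..r}" and "j < n" and "A \<in> carrier_mat p m" and "i < p"
  shows "(A * PiMat m n r \<alpha> \<beta>) $$ (i,j) = 0"
proof -
  have "PiMat m n r \<alpha> \<beta> $$ (c,j) = 0" if "c < m" for c
    using assms(1,2) that by (intro PiMat_index_eq_0) (auto simp: image_iff)
  then show ?thesis
    using assms(2-4) by (simp add: PiMat_def scalar_prod_def)
qed

lemma intertwined_index_TR_eq_0:
  assumes "inj_on \<beta> {1..r}" and "R \<in> carrier_mat n n"
    and "L \<in> Lset m (Pset m)" and "\<alpha> ` {1..r} \<subseteq> {1..m}" and "strict_mono_on {1..r} \<alpha>"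
    and intertwine: "L * PiMat m n r \<alpha> \<beta> = PiMat m n r \<alpha> \<beta> * R"
    and "(Suc i, Suc j) \<in> TR r \<beta>" and "i < n" and "j < n"
  shows "R $$ (i,j) = 0"
proof -
  obtain k where k: "k \<in> {1..r}" "\<beta> k = Suc i"
    and later: "\<And>k'. k' \<in> {1..r} \<Longrightarrow> \<beta> k' = Suc j \<Longrightarrow> k < k'"
    using assms(7) by (rule TR_elim) blast
  have index_\<alpha>: "\<exists>c. \<alpha> k' = Suc c \<and> c < m" if "k' \<in> {1..r}" for k'
  proof -
    have "\<alpha> k' \<in> {1..m}" using assms(4) that by blast
    then show ?thesis by (cases "\<alpha> k'") auto
  qed
  obtain a where a: "\<alpha> k = Suc a" "a < m"
    using index_\<alpha>[OF k(1)] by blast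
  have inj_\<alpha>: "inj_on \<alpha> {1..r}" using assms(5) by (rule strict_mono_on_imp_inj_on)
  have L: "L \<in> carrier_mat m m" using assms(3) by (rule Lset_carrier)
  have "R $$ (i,j) = (PiMat m n r \<alpha> \<beta> * R) $$ (a,j)"
    using PiMat_mult_index[where \<beta> = \<beta>, OF inj_\<alpha> k(1) a(1) k(2) a(2) assms(8,2,9)] by simp
  also have "\<dots> = (L * PiMat m n r \<alpha> \<beta>) $$ (a,j)" by (simp only: intertwine)
  also have "\<dots> = 0"
  proof (cases "Suc j \<in> \<beta> ` {1..r}")
    case True
    then obtain k' where k': "k' \<in> {1..r}" "\<beta> k' = Suc j" by auto
    obtain b where b: "\<alpha> k' = Suc b" "b < m"
      using index_\<alpha>[OF k'(1)] by blast
    have "\<alpha> k < \<alpha> k'"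
      using assms(5) k(1) k'(1) later[OF k'] by (simp add: strict_mono_onD)
    then have "a < b" using a b by simp
    then have "(Suc a, Suc b) \<notin> Pset m" by (simp add: Pset_def)
    then have "L $$ (a,b) = 1\<^sub>m m $$ (a,b)" by (rule Lset_index_notin[OF assms(3) a(2) b(2)])
    then have "L $$ (a,b) = 0" using \<open>a < b\<close> b(2) by simp
    then show ?thesis
      using mult_PiMat_index[where \<alpha> = \<alpha>, OF assms(1) k'(1,2) b(1) b(2) assms(9) L a(2)] by simp
  next
    case False
    show ?thesis by (rule mult_PiMat_index_eq_0[OF False assms(9) L a(2)])
  qed
  finally show ?thesis .
qed

theorem lemma5:
  fixes r n :: nat and \<beta> :: "nat \<Rightarrow> nat" and R :: "bit mat"
  assumes "inj_on \<beta> {1..r}" and "\<beta> ` {1..r} \<subseteq> {1..n}"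
    and "R \<in> Lset n (TR r \<beta>)"
    and "\<exists>m (L :: bit mat) \<alpha>. L \<in> Lset m (Pset m) \<and> \<alpha> ` {1..r} \<subseteq> {1..m}
           \<and> strict_mono_on {1..r} \<alpha>
           \<and> L * PiMat m n r \<alpha> \<beta> = PiMat m n r \<alpha> \<beta> * R"
  shows "R = 1\<^sub>m n"
proof -
  obtain m L \<alpha> where L: "L \<in> Lset m (Pset m)" and \<alpha>: "\<alpha> ` {1..r} \<subseteq> {1..m}"
    "strict_mono_on {1..r} \<alpha>" and intertwine: "L * PiMat m n r \<alpha> \<beta> = PiMat m n r \<alpha> \<beta> * R"
    using assms(4) by blast
  have R: "R \<in> carrier_mat n n" using assms(3) by (rule Lset_carrier)
  have "R $$ (i,j) = 1\<^sub>m n $$ (i,j)" if ij: "i < n" "j < n" for i j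
  proof (cases "(Suc i, Suc j) \<in> TR r \<beta>")
    case True
    then have "j \<noteq> i" by (auto elim: TR_elim)
    then show ?thesis
      using intertwined_index_TR_eq_0[OF assms(1) R L \<alpha> intertwine True ij] ij by simp
  next
    case False
    then show ?thesis using Lset_index_notin[OF assms(3) ij] by simp
  qed
  with R show ?thesis by (intro eq_matI) auto
qed

end
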